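(* Let $\phi$ be a posterior family for a model $\pi$ with data space $Y$ and parameter space $\Theta$, and let $f$ be a test quantity. Then for every $y\in Y$: $C_{\phi,f}(s\mid y)=C_f(s\mid y)$ for all $s\in\mathbb{R}$ if and only if $q_{\phi,f}(x\mid y)=x$ for all $x\in[0,1]$.
   Context: Model $\pi$: prior density $\pi_{\text{prior}}(\theta)$ on $\Theta$, observation density $\pi_{\text{obs}}(y\mid\theta)$ on $Y$, $\pi_{\text{marg}}(y)=\int_\Theta\pi_{\text{obs}}(y\mid\theta)\pi_{\text{prior}}(\theta)\,\mathrm{d}\theta$, $\pi_{\text{post}}(\theta\mid y)=\pi_{\text{obs}}(y\mid\theta)\pi_{\text{prior}}(\theta)/\pi_{\text{marg}}(y)$. A posterior family is $\phi:\Theta\times Y\to\mathbb{R}^+$ with $\int_\Theta\phi(\theta\mid y)\,\mathrm{d}\theta=1$ for all $y$; a test quantity is a measurable $f:\Theta\times Y\to\mathbb{R}$. Fitted CDF $C_{\phi,f}(s\mid y)=\int_\Theta\mathbb{I}[f(\theta,y)\le s]\phi(\theta\mid y)\,\mathrm{d}\theta$; true CDF $C_f(s\mid y)=\int_\Theta\mathbb{I}[f(\theta,y)\le s]\pi_{\text{post}}(\theta\mid y)\,\mathrm{d}\theta$; fitted tie probability $D_{\phi,f}(s\mid y)=\int_\Theta\mathbb{I}[f(\theta,y)=s]\phi(\theta\mid y)\,\mathrm{d}\theta$. With $U\sim\mathrm{uniform}[0,1]$, $r_{\phi,f}(x\mid\tilde\theta,y)=\Pr\big(C_{\phi,f}(f(\tilde\theta,y)\mid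 y)-U\,D_{\phi,f}(f(\tilde\theta,y)\mid y)\le x\big)$ and $q_{\phi,f}(x\mid y)=\int_\Theta\pi_{\text{post}}(\tilde\theta\mid y)r_{\phi,f}(x\mid\tilde\theta,y)\,\mathrm{d}\tilde\theta$. *)

theory Defs
  imports "HOL-Analysis.Analysis"
begin

text \<open>Parameter space Theta = space M (base measure d theta), data space Y = space N.
  Densities are w.r.t. these base measures. Test quantity f and posterior family phi
  are written curried: f theta y, phi theta y (= phi(theta | y)).\<close>

definition marg :: "'a measure \<Rightarrow> ('a \<Rightarrow> real) \<Rightarrow> ('a \<Rightarrow> 'b \<Rightarrow> real) \<Rightarrow> 'b \<Rightarrow> real" where
  "marg M prior obs y = (\<integral>\<theta>. obs \<theta> y * prior \<theta> \<partial>M)"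

definition post :: "'a measure \<Rightarrow> ('a \<Rightarrow> real) \<Rightarrow> ('a \<Rightarrow> 'b \<Rightarrow> real) \<Rightarrow> 'a \<Rightarrow> 'b \<Rightarrow> real" where
  "post M prior obs \<theta> y = obs \<theta> y * prior \<theta> / marg M prior obs y"

definition fitted_cdf :: "'a measure \<Rightarrow> ('a \<Rightarrow> 'b \<Rightarrow> real) \<Rightarrow> ('a \<Rightarrow> 'b \<Rightarrow> real) \<Rightarrow> real \<Rightarrow> 'b \<Rightarrow> real" where
  "fitted_cdf M phi f s y = (\<integral>\<theta>. indicator {\<theta>. f \<theta> y \<le> s} \<theta> * phi \<theta> y \<partial>M)"

definition true_cdf :: "'a measure \<Rightarrow> ('a \<Rightarrow> real) \<Rightarrow> ('a \<Rightarrow> 'b \<Rightarrow> real) \<Rightarrow> ('a \<Rightarrow> 'b \<Rightarrow> real) \<Rightarrow> real \<Rightarrow> 'b \<Rightarrow> real" where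
  "true_cdf M prior obs f s y = (\<integral>\<theta>. indicator {\<theta>. f \<theta> y \<le> s} \<theta> * post M prior obs \<theta> y \<partial>M)"

definition fitted_tie :: "'a measure \<Rightarrow> ('a \<Rightarrow> 'b \<Rightarrow> real) \<Rightarrow> ('a \<Rightarrow> 'b \<Rightarrow> real) \<Rightarrow> real \<Rightarrow> 'b \<Rightarrow> real" where
  "fitted_tie M phi f s y = (\<integral>\<theta>. indicator {\<theta>. f \<theta> y = s} \<theta> * phi \<theta> y \<partial>M)"

text \<open>r(x | theta~, y) = Pr(C - U D <= x) with U ~ uniform[0,1], i.e. the Lebesgue
  measure of the set of u in [0,1] with C - u D <= x.\<close>
definition rand_pit_cdf :: "'a measure \<Rightarrow> ('a \<Rightarrow> 'b \<Rightarrow> real) \<Rightarrow> ('a \<Rightarrow> 'b \<Rightarrow> real) \<Rightarrow> real \<Rightarrow> 'a \<Rightarrow> 'b \<Rightarrow> real" where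
  "rand_pit_cdf M phi f x \<theta>' y =
     measure (uniform_measure lborel {0..1::real})
       {u. fitted_cdf M phi f (f \<theta>' y) y - u * fitted_tie M phi f (f \<theta>' y) y \<le> x}"

definition q_fun :: "'a measure \<Rightarrow> ('a \<Rightarrow> real) \<Rightarrow> ('a \<Rightarrow> 'b \<Rightarrow> real) \<Rightarrow> ('a \<Rightarrow> 'b \<Rightarrow> real) \<Rightarrow> ('a \<Rightarrow> 'b \<Rightarrow> real) \<Rightarrow> real \<Rightarrow> 'b \<Rightarrow> real" where
  "q_fun M prior obs phi f x y =
     (\<integral>\<theta>'. post M prior obs \<theta>' y * rand_pit_cdf M phi f x \<theta>' y \<partial>M)"

end

theory Submission
  imports Defs "HOL-Probability.Probability"
begin

(*
  Push the fitted and the true posterior forward along \<theta> \<mapsto> f \<theta> y to real distributions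
  \<nu> and \<mu>. The fitted CDF and tie probability are then the CDF and the atoms of \<nu>, and
  q(x) is the \<mu>-integral of r\<^sub>\<nu>(x | t) = Pr(F\<^sub>\<nu>(t) - U \<nu>{t} \<le> x), the conditional CDF of
  the randomized probability integral transform of \<nu> at the observation t.

  If \<mu> = \<nu>, the randomized PIT is uniform: with a the point where F\<^sub>\<nu> crosses x, r\<^sub>\<nu>(x | t)
  is 1 for t < a and \<nu>-almost surely 0 for t > a, while the atom at a contributes exactly
  the missing mass x - F\<^sub>\<nu>(a-). Conversely, r\<^sub>\<nu>(F\<^sub>\<nu>(s) | \<cdot>) dominates the indicator of
  (-\<infinity>, s], which in turn dominates r\<^sub>\<nu>(x | \<cdot>) for x < F\<^sub>\<nu>(s); integrating against \<mu>
  and using q(x) = x squeezes F\<^sub>\<mu>(s) to F\<^sub>\<nu>(s).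
*)

definition randomized_pit_cdf :: "real \<Rightarrow> real \<Rightarrow> real \<Rightarrow> real" where
  "randomized_pit_cdf c d x = measure (uniform_measure lborel {0..1::real}) {u. c - u * d \<le> x}"

lemma randomized_pit_cdf_eq:
  assumes "d \<ge> 0"
  shows "randomized_pit_cdf c d x =
    (if d = 0 then (if c \<le> x then 1 else 0) else max 0 (min 1 ((x - c + d) / d)))"
proof -
  have "{u::real. c - u * d \<le> x} \<in> sets lborel" by measurable
  then have "randomized_pit_cdf c d x = measure lborel ({0..1} \<inter> {u. c - u * d \<le> x})"
    unfolding randomized_pit_cdf_def by (subst measure_uniform_measure) auto
  also have "\<dots> = (if d = 0 then (if c \<le> x then 1 else 0) else max 0 (min 1 ((x - c + d) / d)))"
  proof (cases "d = 0")
    case False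
    with assms have "d > 0" by simp
    define l where "l = (c - x) / d"
    have "{u::real. c - u * d \<le> x} = {l..}"
      using \<open>d > 0\<close> by (auto simp: l_def field_simps)
    then have "{0..1} \<inter> {u::real. c - u * d \<le> x} = {max 0 l..1}" by auto
    moreover have "(x - c + d) / d = 1 - l" using \<open>d > 0\<close> by (simp add: l_def field_simps)
    ultimately show ?thesis using False by (auto simp: max_def min_def)
  qed simp
  finally show ?thesis .
qed

lemma randomized_pit_cdf_nonneg: "d \<ge> 0 \<Longrightarrow> 0 \<le> randomized_pit_cdf c d x"
  by (simp add: randomized_pit_cdf_eq)

lemma randomized_pit_cdf_le_1: "d \<ge> 0 \<Longrightarrow> randomized_pit_cdf c d x \<le> 1"
  by (simp add: randomized_pit_cdf_eq)

lemma randomized_pit_cdf_eq_1: "d \<ge> 0 \<Longrightarrow> c \<le> x \<Longrightarrow> randomized_pit_cdf c d x = 1"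
  by (auto simp: randomized_pit_cdf_eq field_simps min_def)

lemma randomized_pit_cdf_eq_0:
  "d \<ge> 0 \<Longrightarrow> x < c \<Longrightarrow> x \<le> c - d \<Longrightarrow> randomized_pit_cdf c d x = 0"
  by (auto simp: randomized_pit_cdf_eq field_simps max_def min_def divide_le_0_iff)

lemma randomized_pit_cdf_eq_ratio:
  "d > 0 \<Longrightarrow> c - d \<le> x \<Longrightarrow> x \<le> c \<Longrightarrow> randomized_pit_cdf c d x = (x - c + d) / d"
  by (auto simp: randomized_pit_cdf_eq field_simps max_def min_def)

lemma down_closed_real_cases:
  fixes S :: "real set"
  assumes down: "\<And>s t. t \<in> S \<Longrightarrow> s \<le> t \<Longrightarrow> s \<in> S"
  obtains "S = {}" | "S = UNIV" | b where "S = {..b}" | b where "S = {..<b}"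
proof -
  consider "S = {}" | "S = UNIV" | "S \<noteq> {}" "S \<noteq> UNIV" by blast
  then show thesis
  proof cases
    case 3
    then obtain t0 where "t0 \<notin> S" by auto
    then have bdd: "bdd_above S"
      using down by (metis bdd_above_def nle_le)
    have "{..<Sup S} \<subseteq> S"
      using down less_cSup_iff[OF 3(1) bdd] by (force simp: less_imp_le)
    moreover have "S \<subseteq> {..Sup S}"
      using cSup_upper[OF _ bdd] by auto
    ultimately have "S = {..Sup S} \<or> S = {..<Sup S}"
      by (cases "Sup S \<in> S") (auto simp: order.order_iff_strict)
    then show thesis using that(3,4) by blast
  qed (use that in auto)
qed

text \<open>The paper's r(x | \<theta>', y), for the observation t = f \<theta>' y and the fitted law M of f.\<close>
definition pit_cdf :: "real measure \<Rightarrow> real \<Rightarrow> real \<Rightarrow> real" where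
  "pit_cdf M x t = randomized_pit_cdf (cdf M t) (measure M {t}) x"

context real_distribution
begin

lemma measure_lessThan_eq: "measure M {..<t} = cdf M t - measure M {t}"
proof -
  have "measure M ({..<t} \<union> {t}) = measure M {..<t} + measure M {t}"
    by (rule finite_measure_Union) auto
  moreover have "{..<t} \<union> {t} = {..t}" by auto
  ultimately show ?thesis by (simp add: cdf_def)
qed

lemma measure_atom_le_cdf: "measure M {t} \<le> cdf M t"
  unfolding cdf_def by (auto intro!: finite_measure_mono)

lemma cdf_le_cdf_minus_atom:
  assumes "s < t"
  shows "cdf M s \<le> cdf M t - measure M {t}"
proof -
  have "measure M {..s} \<le> measure M {..<t}"
    using assms by (intro finite_measure_mono) auto
  then show ?thesis by (simp add: cdf_def measure_lessThan_eq)
qed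

lemma borel_measurable_cdf [measurable]: "cdf M \<in> borel_measurable borel"
  by (rule borel_measurable_mono) (auto simp: mono_def cdf_nondecreasing)

lemma borel_measurable_measure_atom [measurable]: "(\<lambda>t. measure M {t}) \<in> borel_measurable borel"
proof -
  have "mono (\<lambda>t. measure M {..<t})" by (auto simp: mono_def intro!: finite_measure_mono)
  then have "(\<lambda>t. measure M {..<t}) \<in> borel_measurable borel" by (rule borel_measurable_mono)
  then have "(\<lambda>t. cdf M t - measure M {..<t}) \<in> borel_measurable borel" by measurable
  then show ?thesis by (simp add: measure_lessThan_eq)
qed

lemma borel_measurable_pit_cdf [measurable]: "pit_cdf M x \<in> borel_measurable borel"
proof -
  have "pit_cdf M x = (\<lambda>t. if measure M {t} = 0 then (if cdf M t \<le> x then 1 else 0)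
      else max 0 (min 1 ((x - cdf M t + measure M {t}) / measure M {t})))"
    unfolding pit_cdf_def by (simp add: randomized_pit_cdf_eq fun_eq_iff)
  also have "\<dots> \<in> borel_measurable borel" by measurable
  finally show ?thesis .
qed

lemma pit_cdf_nonneg: "0 \<le> pit_cdf M x t"
  unfolding pit_cdf_def by (rule randomized_pit_cdf_nonneg) simp

lemma pit_cdf_le_1: "pit_cdf M x t \<le> 1"
  unfolding pit_cdf_def by (rule randomized_pit_cdf_le_1) simp

lemma pit_cdf_eq_1: "cdf M t \<le> x \<Longrightarrow> pit_cdf M x t = 1"
  unfolding pit_cdf_def by (rule randomized_pit_cdf_eq_1) simp_all

lemma pit_cdf_eq_0: "x < cdf M t \<Longrightarrow> x \<le> cdf M t - measure M {t} \<Longrightarrow> pit_cdf M x t = 0"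
  unfolding pit_cdf_def by (rule randomized_pit_cdf_eq_0) simp_all

lemma pit_cdf_eq_ratio:
  "measure M {t} > 0 \<Longrightarrow> cdf M t - measure M {t} \<le> x \<Longrightarrow> x \<le> cdf M t \<Longrightarrow>
    pit_cdf M x t = (x - cdf M t + measure M {t}) / measure M {t}"
  unfolding pit_cdf_def by (rule randomized_pit_cdf_eq_ratio)

lemma integrable_pit_cdf:
  assumes "finite_measure N" "sets N = sets borel"
  shows "integrable N (pit_cdf M x)"
proof -
  interpret N: finite_measure N by fact
  show ?thesis
  proof (rule N.integrable_const_bound[where B=1])
    show "AE t in N. norm (pit_cdf M x t) \<le> 1"
      using pit_cdf_nonneg pit_cdf_le_1 by (intro AE_I2) (simp add: abs_le_iff)
    show "pit_cdf M x \<in> borel_measurable N"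
      unfolding measurable_cong_sets[OF assms(2) refl] by (rule borel_measurable_pit_cdf)
  qed
qed

lemma measure_cdf_le:
  assumes "0 \<le> c"
  shows "measure M {t. cdf M t \<le> c} \<le> c"
proof -
  define S where "S = {t. cdf M t \<le> c}"
  have down: "s \<in> S" if "t \<in> S" "s \<le> t" for s t
    using that cdf_nondecreasing[of s t] by (auto simp: S_def)
  consider "S = {}" | "S = UNIV" | b where "S = {..b}" | b where "S = {..<b}"
    by (rule down_closed_real_cases[of S, OF down])
  then have "measure M S \<le> c"
  proof cases
    case 2
    then have "\<forall>t. cdf M t \<le> c" by (simp add: S_def set_eq_iff)
    then have "1 \<le> c"
      by (intro tendsto_upperbound[OF cdf_lim_at_top_prob] always_eventually) auto
    then show ?thesis using prob_le_1[of S] by linarith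
  next
    case (3 b)
    then have "b \<in> S" by simp
    then have "cdf M b \<le> c" by (simp add: S_def)
    with 3 show ?thesis by (simp add: cdf_def)
  next
    case (4 b)
    have "measure M {..<b} \<le> c"
    proof (rule tendsto_upperbound[OF cdf_at_left])
      show "\<forall>\<^sub>F t in at_left b. cdf M t \<le> c"
        using 4 by (auto simp: S_def eventually_at_left_field set_eq_iff intro: exI[of _ "b - 1"])
    qed simp
    then show ?thesis using 4 by simp
  qed (use assms in simp)
  then show ?thesis by (simp add: S_def)
qed

lemma ex_greater_cdf_less:
  assumes "cdf M b < x"
  shows "\<exists>t>b. cdf M t < x"
proof -
  have "\<forall>\<^sub>F t in at_right b. cdf M t < x"
    using cdf_is_right_cont[of b] assms by (simp add: continuous_within order_tendsto_iff)
  then have "\<forall>\<^sub>F t in at_right b. b < t \<and> cdf M t < x"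
    by (intro eventually_conj eventually_at_right_less)
  then show ?thesis
    using eventually_happens'[of "at_right b"] by auto
qed

lemma obtain_cdf_crossing:
  assumes "0 < x" "x < 1"
  obtains a where "\<And>t. t < a \<Longrightarrow> cdf M t < x" "x \<le> cdf M a"
proof -
  define S where "S = {t. cdf M t < x}"
  have down: "s \<in> S" if "t \<in> S" "s \<le> t" for s t
    using that cdf_nondecreasing[of s t] by (auto simp: S_def)
  have nonempty: "S \<noteq> {}"
  proof -
    have "\<forall>\<^sub>F t in at_bot. cdf M t < x"
      using cdf_lim_at_bot assms(1) by (simp add: order_tendsto_iff)
    then obtain t where "cdf M t < x" by (auto simp: eventually_at_bot_linorder)
    then have "t \<in> S" by (simp add: S_def)
    then show ?thesis by auto
  qed
  have not_univ: "S \<noteq> UNIV"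
  proof -
    have "\<forall>\<^sub>F t in at_top. x < cdf M t"
      using cdf_lim_at_top_prob assms(2) by (simp add: order_tendsto_iff)
    then obtain t where "x < cdf M t" by (auto simp: eventually_at_top_linorder)
    then have "t \<notin> S" by (simp add: S_def)
    then show ?thesis by auto
  qed
  have not_atMost: "S \<noteq> {..b}" for b
  proof
    assume S: "S = {..b}"
    then have "b \<in> S" by simp
    then obtain t where "b < t" "cdf M t < x"
      using ex_greater_cdf_less by (auto simp: S_def)
    moreover from \<open>cdf M t < x\<close> have "t \<in> S" by (simp add: S_def)
    ultimately show False using S by simp
  qed
  obtain a where a: "S = {..<a}"
    by (rule down_closed_real_cases[of S, OF down]) (use nonempty not_univ not_atMost in blast)+
  show thesis
  proof (rule that)
    show "cdf M t < x" if "t < a" for t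
    proof -
      have "t \<in> S" using that a by simp
      then show ?thesis by (simp add: S_def)
    qed
    have "a \<notin> S" using a by simp
    then show "x \<le> cdf M a" by (simp add: S_def)
  qed
qed

lemma null_sets_cdf_flat:
  assumes "0 \<le> x" "x \<le> cdf M a"
  shows "{t. a < t \<and> cdf M t \<le> x} \<in> null_sets M"
proof -
  define N where "N = {t. a < t \<and> cdf M t \<le> x}"
  have N_sets: "N \<in> sets M" unfolding N_def by measurable
  have "measure M N = 0"
  proof (cases "N = {}")
    case False
    then obtain t where "a < t" "cdf M t \<le> x" by (auto simp: N_def)
    then have "cdf M a \<le> x" using cdf_nondecreasing[of a t] by linarith
    then have "N \<union> {..a} \<subseteq> {t. cdf M t \<le> x}"
      using cdf_nondecreasing[of _ a] by (auto simp: N_def intro: order_trans)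
    then have "measure M (N \<union> {..a}) \<le> measure M {t. cdf M t \<le> x}"
      by (rule finite_measure_mono) measurable
    also have "\<dots> \<le> x" by (rule measure_cdf_le[OF assms(1)])
    finally have "measure M (N \<union> {..a}) \<le> x" .
    moreover have "measure M (N \<union> {..a}) = measure M N + cdf M a"
    proof -
      have "N \<inter> {..a} = {}" by (auto simp: N_def)
      then show ?thesis
        by (subst finite_measure_Union[OF N_sets]) (simp_all add: cdf_def)
    qed
    ultimately show ?thesis
      using assms(2) measure_nonneg[of M N] by linarith
  qed simp
  with N_sets have "N \<in> null_sets M"
    by (intro null_setsI) (simp_all add: emeasure_eq_measure)
  then show ?thesis by (simp only: N_def)
qed

lemma AE_pit_cdf_crossing:
  assumes below: "\<And>t. t < a \<Longrightarrow> cdf M t < x" and above: "x \<le> cdf M a"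
  shows "AE t in M. pit_cdf M x t = indicator {..<a} t + indicator {a} t * pit_cdf M x a"
proof -
  have "0 \<le> x" using below[of "a - 1"] cdf_nonneg[of "a - 1"] by linarith
  have "pit_cdf M x t = indicator {..<a} t + indicator {a} t * pit_cdf M x a"
    if "t \<notin> {t. a < t \<and> cdf M t \<le> x}" for t
  proof (cases t a rule: linorder_cases)
    case less
    then show ?thesis using below[OF less] by (simp add: pit_cdf_eq_1)
  next
    case greater
    with that have "x < cdf M t" by auto
    moreover have "x \<le> cdf M t - measure M {t}"
      using cdf_le_cdf_minus_atom[OF greater] above by linarith
    ultimately show ?thesis using greater by (simp add: pit_cdf_eq_0)
  qed simp
  then show ?thesis
    by (intro AE_I'[OF null_sets_cdf_flat[OF \<open>0 \<le> x\<close> above]]) blast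
qed

lemma integral_pit_cdf_crossing:
  assumes below: "\<And>t. t < a \<Longrightarrow> cdf M t < x" and above: "x \<le> cdf M a"
  shows "(\<integral>t. pit_cdf M x t \<partial>M) = x"
proof -
  have "0 \<le> x" using below[of "a - 1"] cdf_nonneg[of "a - 1"] by linarith
  have below_mass: "cdf M a - measure M {a} \<le> x"
  proof -
    have "measure M {..<a} \<le> measure M {t. cdf M t \<le> x}"
      using below by (intro finite_measure_mono) (auto intro: less_imp_le)
    then show ?thesis using measure_cdf_le[OF \<open>0 \<le> x\<close>] by (simp add: measure_lessThan_eq)
  qed
  have "(\<integral>t. pit_cdf M x t \<partial>M) = (\<integral>t. indicator {..<a} t + indicator {a} t * pit_cdf M x a \<partial>M)"
    by (rule integral_cong_AE) (use AE_pit_cdf_crossing[OF assms] in auto)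
  also have "\<dots> = cdf M a - measure M {a} + measure M {a} * pit_cdf M x a"
    by (simp add: measure_lessThan_eq less_top[symmetric])
  also have "\<dots> = x"
  proof (cases "measure M {a} = 0")
    case True
    then show ?thesis using above below_mass by (simp add: pit_cdf_eq_1)
  next
    case False
    then have "measure M {a} > 0" using measure_nonneg[of M "{a}"] by linarith
    then show ?thesis
      using above below_mass by (simp add: pit_cdf_eq_ratio field_simps)
  qed
  finally show ?thesis .
qed

lemma integral_pit_cdf:
  assumes "0 \<le> x" "x \<le> 1"
  shows "(\<integral>t. pit_cdf M x t \<partial>M) = x"
proof -
  consider "x = 0" | "x = 1" | "0 < x" "x < 1" using assms by linarith
  then show ?thesis
  proof cases
    case 1
    have "pit_cdf M 0 t \<le> indicator {t. cdf M t \<le> 0} t" for t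
      using measure_atom_le_cdf[of t] pit_cdf_le_1[of 0 t] pit_cdf_eq_0[of 0 t]
      by (cases "cdf M t \<le> 0") auto
    then have "(\<integral>t. pit_cdf M 0 t \<partial>M) \<le> (\<integral>t. indicator {t. cdf M t \<le> 0} t \<partial>M)"
      by (intro integral_mono integrable_pit_cdf finite_measure_axioms)
        (auto simp: less_top[symmetric])
    also have "\<dots> \<le> 0" using measure_cdf_le[of 0] by (simp add: less_top[symmetric])
    finally have "(\<integral>t. pit_cdf M 0 t \<partial>M) \<le> 0" .
    moreover have "0 \<le> (\<integral>t. pit_cdf M 0 t \<partial>M)"
      by (rule integral_nonneg_AE) (simp add: pit_cdf_nonneg)
    ultimately show ?thesis using 1 by simp
  next
    case 2
    then show ?thesis using cdf_bounded_prob prob_space by (simp add: pit_cdf_eq_1)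
  next
    case 3
    obtain a where "\<And>t. t < a \<Longrightarrow> cdf M t < x" "x \<le> cdf M a"
      using obtain_cdf_crossing[OF 3] by blast
    then show ?thesis by (rule integral_pit_cdf_crossing)
  qed
qed

lemma indicator_atMost_le_pit_cdf: "indicator {..s} t \<le> pit_cdf M (cdf M s) t"
  using cdf_nondecreasing[of t s] pit_cdf_nonneg pit_cdf_eq_1 by (cases "t \<le> s") auto

lemma pit_cdf_le_indicator_atMost:
  assumes "x < cdf M s"
  shows "pit_cdf M x t \<le> indicator {..s} t"
proof (cases "t \<le> s")
  case False
  then have "x \<le> cdf M t - measure M {t}" and "x < cdf M t"
    using assms cdf_le_cdf_minus_atom[of s t] cdf_nondecreasing[of s t] by auto
  then show ?thesis using False by (simp add: pit_cdf_eq_0)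
qed (simp add: pit_cdf_le_1)

end

lemma cdf_eq_iff_integral_pit_cdf_eq:
  assumes nu: "real_distribution nu" and mu: "real_distribution mu"
  shows "(\<forall>s. cdf nu s = cdf mu s) \<longleftrightarrow> (\<forall>x\<in>{0..1}. (\<integral>t. pit_cdf nu x t \<partial>mu) = x)"
proof
  interpret nu: real_distribution nu by fact
  interpret mu: real_distribution mu by fact
  have pit_int: "integrable mu (pit_cdf nu x)" for x
    by (rule nu.integrable_pit_cdf) (auto intro: mu.finite_measure_axioms)
  have ind_int: "integrable mu (indicator {..s} :: real \<Rightarrow> real)" for s
    by (auto simp: less_top[symmetric])
  show "\<forall>x\<in>{0..1}. (\<integral>t. pit_cdf nu x t \<partial>mu) = x" if "\<forall>s. cdf nu s = cdf mu s"
  proof -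
    have "nu = mu" using that cdf_unique[OF nu mu] by blast
    then show ?thesis using nu.integral_pit_cdf by auto
  qed
  show "\<forall>s. cdf nu s = cdf mu s" if uniform: "\<forall>x\<in>{0..1}. (\<integral>t. pit_cdf nu x t \<partial>mu) = x"
  proof
    fix s
    have "cdf mu s = (\<integral>t. indicator {..s} t \<partial>mu)" by (simp add: cdf_def)
    also have "\<dots> \<le> (\<integral>t. pit_cdf nu (cdf nu s) t \<partial>mu)"
      by (rule integral_mono[OF ind_int pit_int nu.indicator_atMost_le_pit_cdf])
    also have "\<dots> = cdf nu s" using uniform nu.cdf_nonneg nu.cdf_bounded_prob by auto
    finally have "cdf mu s \<le> cdf nu s" .
    moreover have "cdf nu s \<le> cdf mu s"
    proof (rule dense_le)
      fix x assume x: "x < cdf nu s"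
      show "x \<le> cdf mu s"
      proof (cases "0 \<le> x")
        case True
        have "x = (\<integral>t. pit_cdf nu x t \<partial>mu)"
          using uniform True x nu.cdf_bounded_prob[of s] by auto
        also have "\<dots> \<le> (\<integral>t. indicator {..s} t \<partial>mu)"
          by (rule integral_mono[OF pit_int ind_int nu.pit_cdf_le_indicator_atMost[OF x]])
        finally show ?thesis by (simp add: cdf_def)
      qed (use mu.cdf_nonneg[of s] in linarith)
    qed
    ultimately show "cdf nu s = cdf mu s" by linarith
  qed
qed

lemma real_distribution_distr_density:
  fixes w g :: "'a \<Rightarrow> real"
  assumes [measurable]: "w \<in> borel_measurable M"
    and "\<And>x. x \<in> space M \<Longrightarrow> 0 \<le> w x"
    and "integrable M w" "(\<integral>x. w x \<partial>M) = 1"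
    and [measurable]: "g \<in> borel_measurable M"
  shows "real_distribution (distr (density M w) borel g)"
proof -
  have "emeasure (density M w) (space M) = (\<integral>\<^sup>+ x. ennreal (w x) \<partial>M)"
    by (auto simp: emeasure_density intro!: nn_integral_cong)
  also have "\<dots> = 1"
    using assms by (subst nn_integral_eq_integral) auto
  finally interpret prob_space "density M w" by (intro prob_spaceI) simp
  show ?thesis by (intro real_distribution_distr) simp
qed

lemma integral_distr_density:
  fixes w g :: "'a \<Rightarrow> real" and H :: "real \<Rightarrow> real"
  assumes [measurable]: "w \<in> borel_measurable M" "g \<in> borel_measurable M" "H \<in> borel_measurable borel"
    and "\<And>x. x \<in> space M \<Longrightarrow> 0 \<le> w x"
  shows "(\<integral>t. H t \<partial>distr (density M w) borel g) = (\<integral>x. w x * H (g x) \<partial>M)"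
proof -
  have "(\<integral>t. H t \<partial>distr (density M w) borel g) = (\<integral>x. H (g x) \<partial>density M w)"
    by (rule integral_distr) simp_all
  also have "\<dots> = (\<integral>x. w x * H (g x) \<partial>M)"
    using assms(4) by (subst integral_density) auto
  finally show ?thesis .
qed

lemma measure_distr_density:
  fixes w g :: "'a \<Rightarrow> real"
  assumes [measurable]: "w \<in> borel_measurable M"
    and "\<And>x. x \<in> space M \<Longrightarrow> 0 \<le> w x" "integrable M w" "(\<integral>x. w x \<partial>M) = 1"
    and [measurable]: "g \<in> borel_measurable M" "A \<in> sets borel"
  shows "measure (distr (density M w) borel g) A = (\<integral>x. indicator {x. g x \<in> A} x * w x \<partial>M)"
proof -
  interpret real_distribution "distr (density M w) borel g"
    by (rule real_distribution_distr_density) fact+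
  have "measure (distr (density M w) borel g) A = (\<integral>t. indicator A t \<partial>distr (density M w) borel g)"
    by simp
  also have "\<dots> = (\<integral>x. indicator {x. g x \<in> A} x * w x \<partial>M)"
    using assms(2) by (subst integral_distr_density) (auto simp: indicator_def mult.commute)
  finally show ?thesis .
qed

lemma post_density:
  assumes "\<And>\<theta>. \<theta> \<in> space M \<Longrightarrow> 0 \<le> obs \<theta> y" "\<And>\<theta>. \<theta> \<in> space M \<Longrightarrow> 0 \<le> prior \<theta>"
    and "integrable M (\<lambda>\<theta>. obs \<theta> y * prior \<theta>)" and "marg M prior obs y > 0"
  shows "\<And>\<theta>. \<theta> \<in> space M \<Longrightarrow> 0 \<le> post M prior obs \<theta> y"
    and "integrable M (\<lambda>\<theta>. post M prior obs \<theta> y)"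
    and "(\<integral>\<theta>. post M prior obs \<theta> y \<partial>M) = 1"
  using assms by (simp_all add: post_def marg_def)

theorem theorem5:
  fixes M :: "'a measure" and N :: "'b measure"
    and prior :: "'a \<Rightarrow> real" and obs :: "'a \<Rightarrow> 'b \<Rightarrow> real"
    and phi :: "'a \<Rightarrow> 'b \<Rightarrow> real" and f :: "'a \<Rightarrow> 'b \<Rightarrow> real"
  assumes sfM: "sigma_finite_measure M" and sfN: "sigma_finite_measure N"
    and prior_meas: "prior \<in> borel_measurable M"
    and prior_nonneg: "\<And>\<theta>. \<theta> \<in> space M \<Longrightarrow> prior \<theta> \<ge> 0"
    and prior_int: "integrable M prior" and prior_one: "(\<integral>\<theta>. prior \<theta> \<partial>M) = 1"
    and obs_meas: "(\<lambda>(\<theta>, y). obs \<theta> y) \<in> borel_measurable (M \<Otimes>\<^sub>M N)"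
    and obs_nonneg: "\<And>\<theta> y. \<theta> \<in> space M \<Longrightarrow> y \<in> space N \<Longrightarrow> obs \<theta> y \<ge> 0"
    and obs_int: "\<And>\<theta>. \<theta> \<in> space M \<Longrightarrow> integrable N (\<lambda>y. obs \<theta> y)"
    and obs_one: "\<And>\<theta>. \<theta> \<in> space M \<Longrightarrow> (\<integral>y. obs \<theta> y \<partial>N) = 1"
    and marg_int: "\<And>y. y \<in> space N \<Longrightarrow> integrable M (\<lambda>\<theta>. obs \<theta> y * prior \<theta>)"
    and marg_pos: "\<And>y. y \<in> space N \<Longrightarrow> marg M prior obs y > 0"
    and phi_meas: "(\<lambda>(\<theta>, y). phi \<theta> y) \<in> borel_measurable (M \<Otimes>\<^sub>M N)"
    and phi_nonneg: "\<And>\<theta> y. \<theta> \<in> space M \<Longrightarrow> y \<in> space N \<Longrightarrow> phi \<theta> y \<ge> 0"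
    and phi_int: "\<And>y. y \<in> space N \<Longrightarrow> integrable M (\<lambda>\<theta>. phi \<theta> y)"
    and phi_one: "\<And>y. y \<in> space N \<Longrightarrow> (\<integral>\<theta>. phi \<theta> y \<partial>M) = 1"
    and f_meas: "(\<lambda>(\<theta>, y). f \<theta> y) \<in> borel_measurable (M \<Otimes>\<^sub>M N)"
    and y: "y \<in> space N"
  shows "(\<forall>s. fitted_cdf M phi f s y = true_cdf M prior obs f s y) \<longleftrightarrow>
         (\<forall>x\<in>{0..1}. q_fun M prior obs phi f x y = x)"
proof -
  have [measurable]: "(\<lambda>\<theta>. phi \<theta> y) \<in> borel_measurable M" "(\<lambda>\<theta>. f \<theta> y) \<in> borel_measurable M"
      "(\<lambda>\<theta>. obs \<theta> y) \<in> borel_measurable M"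
    using measurable_Pair1[OF phi_meas y] measurable_Pair1[OF f_meas y] measurable_Pair1[OF obs_meas y]
    by simp_all
  note prior_meas[measurable]
  have [measurable]: "(\<lambda>\<theta>. post M prior obs \<theta> y) \<in> borel_measurable M"
    unfolding post_def by measurable
  note fitted_density = phi_nonneg[OF _ y] phi_int[OF y] phi_one[OF y]
  note true_density = post_density[OF obs_nonneg[OF _ y] prior_nonneg marg_int[OF y] marg_pos[OF y]]
  define nu where "nu = distr (density M (\<lambda>\<theta>. phi \<theta> y)) borel (\<lambda>\<theta>. f \<theta> y)"
  define mu where "mu = distr (density M (\<lambda>\<theta>. post M prior obs \<theta> y)) borel (\<lambda>\<theta>. f \<theta> y)"
  have nu: "real_distribution nu" and mu: "real_distribution mu"
    unfolding nu_def mu_def using fitted_density true_density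
    by (intro real_distribution_distr_density; simp)+
  have fitted: "fitted_cdf M phi f s y = cdf nu s" and tie: "fitted_tie M phi f s y = measure nu {s}"
    and true: "true_cdf M prior obs f s y = cdf mu s" for s
    unfolding nu_def mu_def cdf_def fitted_cdf_def fitted_tie_def true_cdf_def
    using fitted_density true_density by (subst measure_distr_density; simp)+
  have "q_fun M prior obs phi f x y = (\<integral>t. pit_cdf nu x t \<partial>mu)" for x
    unfolding mu_def using true_density real_distribution.borel_measurable_pit_cdf[OF nu]
    by (subst integral_distr_density)
      (simp_all add: q_fun_def rand_pit_cdf_def pit_cdf_def randomized_pit_cdf_def fitted tie)
  then show ?thesis
    unfolding fitted true by (simp add: cdf_eq_iff_integral_pit_cdf_eq[OF nu mu])
qed

end
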